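(* Let $(\lambda_n)_{n\ge 1}$ be a sequence of positive real numbers and put $\Lambda_n=\sum_{i=1}^n\lambda_i$. Suppose that \[ M=\sup_{n\ge 1}\sum_{k=1}^{n}\frac{\lambda_k}{\Lambda_n}\Big(\frac{\Lambda_{k+1}}{\lambda_{k+1}}-\frac{\Lambda_k}{\lambda_k}\Big)<+\infty . \] Then for every sequence $(a_n)_{n\ge1}$ of non-negative real numbers with $\sum_{n=1}^\infty a_n<\infty$, \[ \sum_{n=1}^{\infty}\prod_{k=1}^{n}a_k^{\lambda_k/\Lambda_n}\le e^{M}\sum_{n=1}^{\infty}a_n . \] *)

theory Defs
  imports "HOL-Analysis.Analysis"
begin

definition Lam :: "(nat \<Rightarrow> real) \<Rightarrow> nat \<Rightarrow> real" where
  "Lam lam n = (\<Sum>i=1..n. lam i)"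

definition Mterm :: "(nat \<Rightarrow> real) \<Rightarrow> nat \<Rightarrow> real" where
  "Mterm lam n = (\<Sum>k=1..n. lam k / Lam lam n *
      (Lam lam (k+1) / lam (k+1) - Lam lam k / lam k))"

end

theory Submission imports Defs begin

(*
  Put b_k = Lambda_k / lambda_k (Lam_ratio lam k). The inequality ln x <= x - 1 gives
  Lambda_k (ln b_(k+1) - ln b_k) <= lambda_k (b_(k+1) - b_k), and summing over k <= n shows
  that the geometric mean of b_1, ..., b_n with weights lambda_k / Lambda_n is at least
  b_(n+1) / e^M. Multiplying the n-th term of the series by this mean and applying the
  weighted AM-GM inequality bounds the term by
  e^M (SUM k <= n. Lambda_k a_k) (1 / Lambda_n - 1 / Lambda_(n+1)),
  and summation by parts shows that these bounds add up to at most e^M (SUM n. a_n).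
*)

lemma weighted_geometric_mean_le_arithmetic_mean:
  fixes w x :: "'a \<Rightarrow> real"
  assumes "finite S" "S \<noteq> {}" "\<And>i. i \<in> S \<Longrightarrow> w i \<ge> 0" "sum w S = 1"
    and "\<And>i. i \<in> S \<Longrightarrow> x i \<ge> 0"
  shows "(\<Prod>i\<in>S. x i powr w i) \<le> (\<Sum>i\<in>S. w i * x i)"
proof (cases "\<exists>i\<in>S. x i = 0")
  case True
  then have "(\<Prod>i\<in>S. x i powr w i) = 0"
    using assms(1) by (auto intro: prod_zero)
  moreover have "(\<Sum>i\<in>S. w i * x i) \<ge> 0"
    using assms by (intro sum_nonneg mult_nonneg_nonneg) auto
  ultimately show ?thesis by simp
next
  case False
  with assms(5) have x_pos: "\<And>i. i \<in> S \<Longrightarrow> x i > 0" by force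
  have "(\<Prod>i\<in>S. x i powr w i) = exp (\<Sum>i\<in>S. w i * ln (x i))"
    using x_pos
    by (simp add: exp_sum assms(1) powr_def mult.commute less_imp_neq[symmetric] cong: prod.cong)
  also have "\<dots> \<le> exp (ln (\<Sum>i\<in>S. w i * x i))"
    using concave_on_sum[OF assms(1,2) ln_concave assms(4), of x] assms(3) x_pos by simp
  also have "\<dots> = (\<Sum>i\<in>S. w i * x i)"
  proof -
    obtain j where "j \<in> S" "w j > 0"
      using assms(3,4) sum_nonpos[of S w] by (metis not_le zero_less_one)
    then have "(\<Sum>i\<in>S. w i * x i) > 0"
      using assms(1,3) x_pos
      by (intro sum_pos2[of S j]) (auto intro: less_imp_le mult_nonneg_nonneg)
    then show ?thesis by simp
  qed
  finally show ?thesis .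
qed

lemma Lam_0 [simp]: "Lam lam 0 = 0"
  by (simp add: Lam_def)

lemma Lam_Suc: "Lam lam (Suc n) = Lam lam n + lam (Suc n)"
  by (simp add: Lam_def)

lemma Lam_nonneg:
  assumes "\<And>k. k \<ge> 1 \<Longrightarrow> lam k > 0"
  shows "Lam lam n \<ge> 0"
  unfolding Lam_def using assms by (intro sum_nonneg) (auto intro: less_imp_le)

lemma Lam_pos:
  assumes "\<And>k. k \<ge> 1 \<Longrightarrow> lam k > 0" and "n \<ge> 1"
  shows "Lam lam n > 0"
  unfolding Lam_def using assms by (intro sum_pos) auto

definition Lam_ratio :: "(nat \<Rightarrow> real) \<Rightarrow> nat \<Rightarrow> real" where
  "Lam_ratio lam k = Lam lam k / lam k"

lemma Lam_ratio_pos: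
  assumes "\<And>k. k \<ge> 1 \<Longrightarrow> lam k > 0" and "k \<ge> 1"
  shows "Lam_ratio lam k > 0"
  using assms Lam_pos[of lam k, OF assms] by (simp add: Lam_ratio_def)

lemma Lam_mult_Mterm:
  assumes "\<And>k. k \<ge> 1 \<Longrightarrow> lam k > 0"
  shows "Lam lam n * Mterm lam n
    = (\<Sum>k=1..n. lam k * (Lam_ratio lam (Suc k) - Lam_ratio lam k))"
proof (cases "n = 0")
  case False
  then have "Lam lam n \<noteq> 0" using Lam_pos[of lam n, OF assms] by simp
  then show ?thesis
    unfolding Mterm_def Lam_ratio_def sum_distrib_left by (intro sum.cong) auto
qed (simp add: Mterm_def)

lemma Lam_ln_Lam_ratio_le:
  assumes lam_pos: "\<And>k. k \<ge> 1 \<Longrightarrow> lam k > 0"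
  shows "Lam lam n * ln (Lam_ratio lam (Suc n))
      - (\<Sum>k=1..n. lam k * ln (Lam_ratio lam k))
    \<le> (\<Sum>k=1..n. lam k * (Lam_ratio lam (Suc k) - Lam_ratio lam k))"
proof (induction n)
  case (Suc n)
  let ?b = "Lam_ratio lam"
  have b_pos: "?b (Suc n) > 0" "?b (Suc (Suc n)) > 0"
    using Lam_ratio_pos[of lam, OF lam_pos] by auto
  have Lam_pos': "Lam lam (Suc n) > 0" using Lam_pos[of lam, OF lam_pos] by simp
  have "Lam lam (Suc n) * (ln (?b (Suc (Suc n))) - ln (?b (Suc n)))
      \<le> Lam lam (Suc n) * (?b (Suc (Suc n)) / ?b (Suc n) - 1)"
    using b_pos Lam_pos' ln_le_minus_one[of "?b (Suc (Suc n)) / ?b (Suc n)"]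
    by (intro mult_left_mono) (auto simp: ln_div)
  also have "\<dots> = lam (Suc n) * (?b (Suc (Suc n)) - ?b (Suc n))"
    using Lam_pos' lam_pos[of "Suc n"] by (simp add: Lam_ratio_def field_simps)
  finally have "Lam lam (Suc n) * (ln (?b (Suc (Suc n))) - ln (?b (Suc n)))
      \<le> lam (Suc n) * (?b (Suc (Suc n)) - ?b (Suc n))" .
  moreover have "(\<Sum>k=1..Suc n. f k) = (\<Sum>k=1..n. f k) + f (Suc n)"
    for f :: "nat \<Rightarrow> real" by simp
  ultimately show ?case
    using Suc.IH Lam_Suc[of lam n] by (simp only:) (simp add: algebra_simps)
qed simp

lemma Lam_ratio_weighted_geometric_mean_ge:
  assumes lam_pos: "\<And>k. k \<ge> 1 \<Longrightarrow> lam k > 0" and n: "n \<ge> 1"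
  shows "Lam_ratio lam (Suc n) / exp (Mterm lam n)
    \<le> (\<Prod>k=1..n. Lam_ratio lam k powr (lam k / Lam lam n))"
proof -
  have Lam_n: "Lam lam n > 0" using Lam_pos[of lam n, OF lam_pos n] .
  have "(ln (Lam_ratio lam (Suc n)) - Mterm lam n) * Lam lam n
      \<le> (\<Sum>k=1..n. lam k * ln (Lam_ratio lam k))"
    using Lam_ln_Lam_ratio_le[of lam n, OF lam_pos] Lam_mult_Mterm[of lam n, OF lam_pos]
    by (simp add: algebra_simps)
  then have "ln (Lam_ratio lam (Suc n)) - Mterm lam n
      \<le> (\<Sum>k=1..n. lam k / Lam lam n * ln (Lam_ratio lam k))"
    using Lam_n by (simp add: pos_le_divide_eq sum_divide_distrib[symmetric])
  then have "exp (ln (Lam_ratio lam (Suc n)) - Mterm lam n)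
      \<le> exp (\<Sum>k=1..n. lam k / Lam lam n * ln (Lam_ratio lam k))"
    by (rule exp_mono)
  then have "Lam_ratio lam (Suc n) / exp (Mterm lam n)
      \<le> exp (\<Sum>k=1..n. lam k / Lam lam n * ln (Lam_ratio lam k))"
    using Lam_ratio_pos[of lam "Suc n", OF lam_pos] by (simp add: exp_diff)
  also have "\<dots> = (\<Prod>k=1..n. exp (lam k / Lam lam n * ln (Lam_ratio lam k)))"
    by (simp add: exp_sum)
  also have "\<dots> = (\<Prod>k=1..n. Lam_ratio lam k powr (lam k / Lam lam n))"
    using Lam_ratio_pos[of lam, OF lam_pos] by (intro prod.cong refl) (force simp: powr_def)
  finally show ?thesis .
qed

lemma weighted_geometric_mean_le_Abel_term:
  assumes lam_pos: "\<And>k. k \<ge> 1 \<Longrightarrow> lam k > 0"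
    and a_nonneg: "\<And>k. k \<ge> 1 \<Longrightarrow> a k \<ge> 0"
    and n: "n \<ge> 1" and M: "Mterm lam n \<le> M"
  shows "(\<Prod>k=1..n. a k powr (lam k / Lam lam n))
    \<le> exp M * ((\<Sum>k=1..n. Lam lam k * a k) * (1 / Lam lam n - 1 / Lam lam (Suc n)))"
proof -
  let ?b = "Lam_ratio lam" and ?w = "\<lambda>k. lam k / Lam lam n"
  let ?G = "\<Prod>k=1..n. a k powr ?w k" and ?P = "\<Prod>k=1..n. ?b k powr ?w k"
  have Lam_n: "Lam lam n > 0" using Lam_pos[of lam n, OF lam_pos n] .
  have b_pos: "?b k > 0" if "k \<ge> 1" for k using Lam_ratio_pos[of lam k, OF lam_pos that] .
  have "?b (Suc n) / exp M \<le> ?b (Suc n) / exp (Mterm lam n)"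
    using b_pos[of "Suc n"] M by (intro divide_left_mono) auto
  also have "\<dots> \<le> ?P"
    using Lam_ratio_weighted_geometric_mean_ge[of lam n, OF lam_pos n] .
  finally have "?b (Suc n) / exp M * ?G \<le> ?P * ?G"
    using a_nonneg by (intro mult_right_mono prod_nonneg) auto
  also have "?P * ?G = (\<Prod>k=1..n. (?b k * a k) powr ?w k)"
    using b_pos a_nonneg
    by (auto simp: prod.distrib[symmetric] powr_mult less_imp_le intro: prod.cong)
  also have "\<dots> \<le> (\<Sum>k=1..n. ?w k * (?b k * a k))"
    using lam_pos Lam_n b_pos a_nonneg n
    by (intro weighted_geometric_mean_le_arithmetic_mean)
       (auto simp: sum_divide_distrib[symmetric] Lam_def less_imp_le)
  also have "\<dots> = (\<Sum>k=1..n. Lam lam k * a k) / Lam lam n"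
    unfolding sum_divide_distrib using lam_pos
    by (intro sum.cong refl) (force simp: Lam_ratio_def)
  finally have "?G \<le> exp M / (Lam lam n * ?b (Suc n)) * (\<Sum>k=1..n. Lam lam k * a k)"
    using b_pos[of "Suc n"] Lam_n by (simp add: field_simps)
  also have "Lam lam n * ?b (Suc n) = 1 / (1 / Lam lam n - 1 / Lam lam (Suc n))"
    using Lam_n lam_pos[of "Suc n"] by (simp add: Lam_ratio_def Lam_Suc field_simps)
  finally show ?thesis by (simp add: ac_simps)
qed

lemma sum_Abel_terms_Lam_eq:
  assumes lam_pos: "\<And>k. k \<ge> 1 \<Longrightarrow> lam k > 0"
  shows "(\<Sum>n<N. (\<Sum>k=1..Suc n. Lam lam k * a k)
            * (1 / Lam lam (Suc n) - 1 / Lam lam (Suc (Suc n))))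
         + (\<Sum>k=1..N. Lam lam k * a k) / Lam lam (Suc N)
       = (\<Sum>n<N. a (Suc n))"
proof (induction N)
  case (Suc N)
  let ?A = "\<lambda>N. \<Sum>k=1..N. Lam lam k * a k"
  have telescope: "x * (1 / p - 1 / q) + x / q = y / p + c"
    if "x = y + p * c" "p > 0" for x y p q c :: real
  proof -
    have "x * (1 / p - 1 / q) + x / q = x / p" by (simp add: algebra_simps)
    with that show ?thesis by (simp add: add_divide_distrib)
  qed
  have "?A (Suc N) * (1 / Lam lam (Suc N) - 1 / Lam lam (Suc (Suc N)))
        + ?A (Suc N) / Lam lam (Suc (Suc N))
      = ?A N / Lam lam (Suc N) + a (Suc N)"
    using Lam_pos[of lam "Suc N", OF lam_pos] by (intro telescope) auto
  then show ?case using Suc.IH by simp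
qed simp

lemma sum_Abel_terms_Lam_le:
  assumes lam_pos: "\<And>k. k \<ge> 1 \<Longrightarrow> lam k > 0"
    and a_nonneg: "\<And>k. k \<ge> 1 \<Longrightarrow> a k \<ge> 0"
  shows "(\<Sum>n<N. (\<Sum>k=1..Suc n. Lam lam k * a k)
            * (1 / Lam lam (Suc n) - 1 / Lam lam (Suc (Suc n))))
       \<le> (\<Sum>n<N. a (Suc n))"
proof -
  have "(\<Sum>k=1..N. Lam lam k * a k) / Lam lam (Suc N) \<ge> 0"
    using Lam_nonneg[of lam, OF lam_pos] a_nonneg
    by (intro divide_nonneg_nonneg sum_nonneg mult_nonneg_nonneg) auto
  then show ?thesis
    using sum_Abel_terms_Lam_eq[of lam a N, OF lam_pos] by linarith
qed

lemma sum_weighted_geometric_means_le: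
  assumes lam_pos: "\<And>k. k \<ge> 1 \<Longrightarrow> lam k > 0"
    and a_nonneg: "\<And>k. k \<ge> 1 \<Longrightarrow> a k \<ge> 0"
    and Mterm_le: "\<And>n. n \<ge> 1 \<Longrightarrow> Mterm lam n \<le> M"
  shows "(\<Sum>n<N. \<Prod>k=1..Suc n. a k powr (lam k / Lam lam (Suc n)))
    \<le> exp M * (\<Sum>n<N. a (Suc n))"
proof -
  have "(\<Sum>n<N. \<Prod>k=1..Suc n. a k powr (lam k / Lam lam (Suc n)))
      \<le> (\<Sum>n<N. exp M * ((\<Sum>k=1..Suc n. Lam lam k * a k)
            * (1 / Lam lam (Suc n) - 1 / Lam lam (Suc (Suc n)))))"
    by (intro sum_mono weighted_geometric_mean_le_Abel_term[of lam a _ M, OF lam_pos a_nonneg])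
       (auto intro: Mterm_le)
  also have "\<dots> \<le> exp M * (\<Sum>n<N. a (Suc n))"
    unfolding sum_distrib_left[symmetric]
    by (intro mult_left_mono sum_Abel_terms_Lam_le[of lam a, OF lam_pos a_nonneg]) auto
  finally show ?thesis .
qed

theorem corollary2p1:
  fixes lam a :: "nat \<Rightarrow> real" and M :: real
  assumes lam_pos: "\<And>n. n \<ge> 1 \<Longrightarrow> lam n > 0"
    and bdd: "bdd_above (Mterm lam ` {1..})"
    and M_def: "M = (SUP n\<in>{1..}. Mterm lam n)"
    and a_nonneg: "\<And>n. n \<ge> 1 \<Longrightarrow> a n \<ge> 0"
    and a_summable: "summable (\<lambda>n. a (Suc n))"
  shows "summable (\<lambda>n. \<Prod>k=1..Suc n. a k powr (lam k / Lam lam (Suc n)))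
    \<and> (\<Sum>n. \<Prod>k=1..Suc n. a k powr (lam k / Lam lam (Suc n)))
        \<le> exp M * (\<Sum>n. a (Suc n))"
proof -
  define G where "G n = (\<Prod>k=1..Suc n. a k powr (lam k / Lam lam (Suc n)))" for n
  have G_nonneg: "G n \<ge> 0" for n unfolding G_def by (intro prod_nonneg) auto
  have Mterm_le: "Mterm lam n \<le> M" if "n \<ge> 1" for n
    unfolding M_def using bdd that by (intro cSUP_upper) auto
  have partial_sums: "(\<Sum>n<N. G n) \<le> exp M * (\<Sum>n. a (Suc n))" for N
  proof -
    have "(\<Sum>n<N. G n) \<le> exp M * (\<Sum>n<N. a (Suc n))"
      unfolding G_def by (rule sum_weighted_geometric_means_le[OF lam_pos a_nonneg Mterm_le])
    also have "\<dots> \<le> exp M * (\<Sum>n. a (Suc n))"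
      using a_summable a_nonneg by (intro mult_left_mono sum_le_suminf) auto
    finally show ?thesis .
  qed
  have "summable G"
    by (rule summableI_nonneg_bounded[OF G_nonneg partial_sums])
  moreover have "suminf G \<le> exp M * (\<Sum>n. a (Suc n))"
    by (rule suminf_le_const[OF \<open>summable G\<close> partial_sums])
  ultimately show ?thesis unfolding G_def by simp
qed

end
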